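(* Let $\delta$ be a positive integer and let $$p_\delta(x)=\left(\frac{1+\sqrt{1-4x}}{2}\right)^{\delta+1}+\left(\frac{1-\sqrt{1-4x}}{2}\right)^{\delta+1}.$$ Then $p_\delta(x)$ is a polynomial in $x$ with constant term $1$; writing $p_\delta(x)=\sum_{i=0}^{d}c_ix^i$ with $d=\deg p_\delta$, the sequence $\zeta(\cdot,\delta)$ satisfies the linear recurrence $$\sum_{i=0}^{d}c_i\,\zeta(m-2i,\delta)=0,\quad\text{i.e.}\quad \zeta(m,\delta)=-\sum_{i=1}^{d}c_i\,\zeta(m-2i,\delta),$$ for every integer $m\ge 2d+1$. In other words, $p_\delta$ is the (reciprocal-form) characteristic polynomial of the step-$2$ linear recurrence satisfied by $\zeta(m,\delta)$.
   Context: For positive integers $m$ and $\delta$, a $\delta$-deviation set of size $m$ is a finite sequence $(\alpha_1,\dots,\alpha_\ell)$ of positive integers such that (i) $\sum_i\alpha_i=m$; (ii) $\big|\sum_i\alpha_{2i-1}-\sum_i\alpha_{2i}\big|\le 1$; (iii) $\big|\sum_{1\le i\le j}(-1)^{i-1}\alpha_i\big|\le\delta$ for every $j\ge1$; and $\zeta(m,\delta)$ is the number of $\delta$-deviation sets of size $m$. (Example: $p_3(x)=1-4x+2x^2$ corresponds to $\zeta(m,3)=4\zeta(m-2,3)-2\zeta(m-4,3)$.) *)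

theory Defs
  imports Complex_Main "HOL-Computational_Algebra.Polynomial"
begin

definition alt_sum :: "nat list \<Rightarrow> int" where
  "alt_sum xs = (\<Sum>i<length xs. (-1) ^ i * int (xs ! i))"

definition deviation_set :: "nat \<Rightarrow> nat \<Rightarrow> nat list \<Rightarrow> bool" where
  "deviation_set m \<delta> xs \<longleftrightarrow>
     (\<forall>a\<in>set xs. 0 < a) \<and>
     sum_list xs = m \<and>
     \<bar>alt_sum xs\<bar> \<le> 1 \<and>
     (\<forall>j. 1 \<le> j \<and> j \<le> length xs \<longrightarrow> \<bar>alt_sum (take j xs)\<bar> \<le> int \<delta>)"

definition zeta :: "nat \<Rightarrow> nat \<Rightarrow> nat" where
  "zeta m \<delta> = card {xs. deviation_set m \<delta> xs}"

definition p_fun :: "nat \<Rightarrow> complex \<Rightarrow> complex" where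
  "p_fun \<delta> x = ((1 + csqrt (1 - 4 * x)) / 2) ^ (\<delta> + 1)
              + ((1 - csqrt (1 - 4 * x)) / 2) ^ (\<delta> + 1)"

end

theory Submission
  imports Defs
begin

(*
  Read a composition of m as a walk on the integers that starts at 0 and moves alpha_1 unit
  steps to the right, alpha_2 to the left, and so on: condition (iii) keeps it inside
  [-delta, delta] and condition (ii) makes it end in [-1, 1]. Splitting off the first unit step
  (after which the walk either turns or continues) gives a transfer recursion, and by the
  reflection principle a walk of length n + 1 whose first step ends at t is counted by
  (T^n w) t, where T g j = g (j - 1) + g (j + 1) and w is the indicator of [-1, 1] extended to
  all integers as an even function that changes sign under translation by 2 delta + 2 (mirror
  images in the absorbing walls +-(delta + 1)). In particular 2 zeta(m, delta) = (T^m w) 0 for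
  m > 0.

  The polynomials L_0 = 2, L_1 = 1, L_(n+2) = L_(n+1) - x L_n satisfy L_n (a b) = a^n + b^n
  whenever a + b = 1, so L_(delta+1) = p_delta. Applied to T = S + S^-1 with S the shift, the
  same identity reads sum_i c_i T^(n-2i) = S^n + S^-n, and for n = delta + 1 this operator
  annihilates every function that changes sign under translation by 2n. Applying it to
  T^(m-n) w at 0 gives the recurrence.
*)

section \<open>Deviation sets as walks\<close>

lemma alt_sum_Cons: "alt_sum (a # xs) = int a - alt_sum xs"
  unfolding alt_sum_def
  by (simp only: length_Cons sum.lessThan_Suc_shift) (simp add: sum_negf)

fun bounded_walk :: "nat \<Rightarrow> int \<Rightarrow> int \<Rightarrow> nat list \<Rightarrow> bool" where
  "bounded_walk \<delta> s d [] \<longleftrightarrow> \<bar>s\<bar> \<le> 1"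
| "bounded_walk \<delta> s d (a # xs) \<longleftrightarrow>
     0 < a \<and> \<bar>s + d * int a\<bar> \<le> int \<delta> \<and> bounded_walk \<delta> (s + d * int a) (- d) xs"

lemma bounded_walk_iff:
  assumes "d = 1 \<or> d = -1"
  shows "bounded_walk \<delta> s d xs \<longleftrightarrow>
     (\<forall>a\<in>set xs. 0 < a) \<and> \<bar>s + d * alt_sum xs\<bar> \<le> 1 \<and>
     (\<forall>i<length xs. \<bar>s + d * alt_sum (take (Suc i) xs)\<bar> \<le> int \<delta>)"
  using assms
proof (induction xs arbitrary: s d)
  case Nil
  then show ?case by (simp add: alt_sum_def)
next
  case (Cons a xs)
  have "- d = 1 \<or> - d = -1"
    using Cons.prems by auto
  note IH = Cons.IH[OF this, of "s + d * int a"]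
  have "s + d * alt_sum (a # xs) = s + d * int a + - d * alt_sum xs"
    and "\<And>i. s + d * alt_sum (take (Suc (Suc i)) (a # xs))
             = s + d * int a + - d * alt_sum (take (Suc i) xs)"
    and "s + d * alt_sum (take (Suc 0) (a # xs)) = s + d * int a"
    by (simp_all add: alt_sum_Cons algebra_simps) (simp add: alt_sum_def)
  then show ?case
    unfolding bounded_walk.simps IH length_Cons All_less_Suc2 by auto
qed

definition walks :: "nat \<Rightarrow> nat \<Rightarrow> int \<Rightarrow> int \<Rightarrow> nat list set" where
  "walks \<delta> n s d = {xs. sum_list xs = n \<and> bounded_walk \<delta> s d xs}"

lemma bounded_walk_pos: "bounded_walk \<delta> s d xs \<Longrightarrow> a \<in> set xs \<Longrightarrow> 0 < a"
  by (induction xs arbitrary: s d) auto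

lemma finite_walks: "finite (walks \<delta> n s d)"
proof (rule finite_subset)
  show "walks \<delta> n s d \<subseteq> {xs. set xs \<subseteq> {0..n} \<and> length xs \<le> n}"
  proof safe
    fix xs assume "xs \<in> walks \<delta> n s d"
    then have sum: "sum_list xs = n" and pos: "\<And>a. a \<in> set xs \<Longrightarrow> 0 < a"
      by (auto simp: walks_def dest: bounded_walk_pos)
    then show "\<And>a. a \<in> set xs \<Longrightarrow> a \<in> {0..n}"
      using member_le_sum_list by fastforce
    have "length xs \<le> sum_list xs"
      using sum_list_mono[of xs "\<lambda>_. 1" id] pos by (simp add: Suc_le_eq sum_list_triv)
    then show "length xs \<le> n" using sum by simp
  qed
qed (rule finite_lists_length_le[OF finite_atLeastAtMost])

lemma zeta_eq_card_walks: "zeta m \<delta> = card (walks \<delta> m 0 1)"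
proof -
  have "(\<forall>j. 1 \<le> j \<and> j \<le> n \<longrightarrow> P j) \<longleftrightarrow> (\<forall>i<n. P (Suc i))" for n and P :: "nat \<Rightarrow> bool"
    by (auto simp: Suc_le_eq) (metis Suc_pred le_simps(3))
  then show ?thesis
    unfolding zeta_def deviation_set_def walks_def bounded_walk_iff[of 1, simplified]
    by (intro arg_cong[where f = card] Collect_cong) auto
qed

lemma Nil_in_walks_iff: "[] \<in> walks \<delta> n s d \<longleftrightarrow> n = 0 \<and> \<bar>s\<bar> \<le> 1"
  by (auto simp: walks_def)

lemma walks_0: "walks \<delta> 0 s d = (if \<bar>s\<bar> \<le> 1 then {[]} else {})"
proof -
  have "xs = []" if "xs \<in> walks \<delta> 0 s d" for xs
    using that by (cases xs) (auto simp: walks_def)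
  moreover have "[] \<in> walks \<delta> 0 s d \<longleftrightarrow> \<bar>s\<bar> \<le> 1"
    by (simp add: walks_def)
  ultimately show ?thesis by auto
qed

lemma bounded_walk_Suc_head:
  assumes "\<bar>s\<bar> \<le> int \<delta>" "d = 1 \<or> d = -1" "0 < a"
  shows "bounded_walk \<delta> s d (Suc a # xs) \<longleftrightarrow> \<bar>s + d\<bar> \<le> int \<delta> \<and> bounded_walk \<delta> (s + d) d (a # xs)"
proof -
  have shift: "s + d * int (Suc a) = s + d + d * int a"
    by (simp add: algebra_simps)
  have "\<bar>s + d\<bar> \<le> int \<delta>" if "\<bar>s + d + d * int a\<bar> \<le> int \<delta>"
    using assms that by auto
  then show ?thesis
    unfolding bounded_walk.simps shift using assms(3) by auto
qed

lemma walks_Suc: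
  assumes "\<bar>s\<bar> \<le> int \<delta>" "d = 1 \<or> d = -1"
  shows "walks \<delta> (Suc n) s d =
    (if \<bar>s + d\<bar> \<le> int \<delta>
     then Cons 1 ` walks \<delta> n (s + d) (- d)
          \<union> (\<lambda>xs. Suc (hd xs) # tl xs) ` (walks \<delta> n (s + d) d - {[]})
     else {})"
proof -
  have mem: "xs \<in> walks \<delta> (Suc n) s d \<longleftrightarrow> \<bar>s + d\<bar> \<le> int \<delta> \<and>
      ((\<exists>ys. xs = 1 # ys \<and> ys \<in> walks \<delta> n (s + d) (- d)) \<or>
       (\<exists>a ys. xs = Suc a # ys \<and> a # ys \<in> walks \<delta> n (s + d) d))" for xs
  proof (cases xs)
    case (Cons b ys)
    consider "b = 0" | "b = 1" | a where "b = Suc a" "0 < a"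
      by (metis One_nat_def not0_implies_Suc zero_less_Suc gr0I)
    then show ?thesis
    proof cases
      case 3
      then show ?thesis
        using bounded_walk_Suc_head[OF assms, of a ys] Cons by (auto simp: walks_def)
    qed (use Cons in \<open>auto simp: walks_def\<close>)
  qed (simp add: walks_def)
  have bump: "xs \<in> (\<lambda>xs. Suc (hd xs) # tl xs) ` (Y - {[]}) \<longleftrightarrow>
      (\<exists>a ys. xs = Suc a # ys \<and> a # ys \<in> Y)" for xs and Y :: "nat list set"
    by (auto intro: rev_image_eqI) (metis list.collapse)
  show ?thesis
    by (rule set_eqI) (auto simp: mem bump)
qed

lemma card_walks_Suc:
  assumes "\<bar>s\<bar> \<le> int \<delta>" "d = 1 \<or> d = -1" "\<bar>s + d\<bar> \<le> int \<delta>"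
  shows "card (walks \<delta> (Suc n) s d) + (if n = 0 \<and> \<bar>s + d\<bar> \<le> 1 then 1 else 0) =
    card (walks \<delta> n (s + d) (- d)) + card (walks \<delta> n (s + d) d)"
proof -
  let ?X = "walks \<delta> n (s + d) (- d)" and ?Y = "walks \<delta> n (s + d) d"
  let ?bump = "\<lambda>xs. Suc (hd xs) # tl xs"
  have "inj_on ?bump (?Y - {[]})"
    by (rule inj_onI) (auto simp: neq_Nil_conv)
  moreover have "Cons 1 ` ?X \<inter> ?bump ` (?Y - {[]}) = {}"
    using hd_in_set bounded_walk_pos by (fastforce simp: walks_def)
  ultimately have "card (walks \<delta> (Suc n) s d) = card ?X + card (?Y - {[]})"
    unfolding walks_Suc[OF assms(1,2)] using assms(3)
    by (simp add: card_Un_disjoint finite_walks card_image)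
  moreover have "card (?Y - {[]}) + (if n = 0 \<and> \<bar>s + d\<bar> \<le> 1 then 1 else 0) = card ?Y"
    using Nil_in_walks_iff[of \<delta> n "s + d" d] finite_walks
    by (auto simp del: card_Diff_insert simp add: card_Suc_Diff1)
  ultimately show ?thesis
    by simp
qed

section \<open>Reflected indicator functions\<close>

definition shift_sum :: "(int \<Rightarrow> 'a::plus) \<Rightarrow> int \<Rightarrow> 'a" where
  "shift_sum g j = g (j - 1) + g (j + 1)"

definition antiperiodic_even :: "int \<Rightarrow> (int \<Rightarrow> 'a::uminus) \<Rightarrow> bool" where
  "antiperiodic_even P g \<longleftrightarrow> (\<forall>j. g (- j) = g j) \<and> (\<forall>j. g (j + P) = - g j)"

lemma antiperiodic_even_shift_sum:
  fixes g :: "int \<Rightarrow> 'a::ab_group_add"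
  assumes "antiperiodic_even P g"
  shows "antiperiodic_even P (shift_sum g)"
proof -
  from assms have ev: "g (- j) = g j" and ap: "g (j + P) = - g j" for j
    by (simp_all add: antiperiodic_even_def)
  have neg: "- j - 1 = - (j + 1)" "- j + 1 = - (j - 1)" for j :: int
    by simp_all
  have "shift_sum g (- j) = shift_sum g j" for j
    unfolding shift_sum_def neg ev by (rule add.commute)
  moreover have "shift_sum g (j + P) = - shift_sum g j" for j
    using ap[of "j - 1"] ap[of "j + 1"] by (simp add: shift_sum_def algebra_simps)
  ultimately show ?thesis
    by (simp add: antiperiodic_even_def)
qed

lemma antiperiodic_even_funpow_shift_sum:
  fixes g :: "int \<Rightarrow> 'a::ab_group_add"
  shows "antiperiodic_even P g \<Longrightarrow> antiperiodic_even P ((shift_sum ^^ n) g)"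
  by (induction n) (simp_all add: antiperiodic_even_shift_sum)

lemma antiperiodic_even_half_period:
  fixes g :: "int \<Rightarrow> 'a::{idom, ring_char_0}"
  assumes "antiperiodic_even (2 * N) g"
  shows "g N = 0"
proof -
  from assms have "g (- N + 2 * N) = - g (- N)" and "g (- N) = g N"
    unfolding antiperiodic_even_def by blast+
  then have "g N + g N = 0"
    by simp
  then show ?thesis
    by (simp flip: mult_2)
qed

(* The value is (-1)^k on k P + {-1, 0, 1} and 0 elsewhere. *)
definition fold_indicator :: "int \<Rightarrow> int \<Rightarrow> 'a::ring_1" where
  "fold_indicator P j =
     (if (j + 1) mod P \<le> 2 then (if even ((j + 1) div P) then 1 else - 1) else 0)"

lemma fold_indicator_add_period:
  "0 < P \<Longrightarrow> fold_indicator P (j + P) = - fold_indicator P j"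
  using div_add_self2[of P "j + 1"] mod_add_self2[of "j + 1" P]
  by (simp add: fold_indicator_def add.commute add.left_commute)

lemma fold_indicator_uminus:
  assumes "2 < P"
  shows "fold_indicator P (- j) = fold_indicator P j"
proof -
  define q r where "q = (j + 1) div P" and "r = (j + 1) mod P"
  have j: "- j + 1 = P * (- q) + (2 - r)" and j': "- j + 1 = P * (- q - 1) + (P + 2 - r)"
    by (simp_all add: q_def r_def algebra_simps)
  have r: "0 \<le> r" "r < P"
    using assms by (simp_all add: r_def)
  have fold_j: "fold_indicator P j = (if r \<le> 2 then (if even q then 1 else - 1) else 0)"
    by (simp add: fold_indicator_def q_def r_def)
  show ?thesis
  proof (cases "r \<le> 2")
    case True
    with r assms have "(- j + 1) div P = - q" "(- j + 1) mod P = 2 - r"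
      using int_div_pos_eq[OF j] int_mod_pos_eq[OF j] by simp_all
    with True r show ?thesis
      by (simp add: fold_indicator_def[of P "- j"] fold_j)
  next
    case False
    with r have "(- j + 1) mod P = P + 2 - r"
      using int_mod_pos_eq[OF j'] by simp
    with False r show ?thesis
      by (simp add: fold_indicator_def[of P "- j"] fold_j)
  qed
qed

lemma antiperiodic_even_fold_indicator: "2 < P \<Longrightarrow> antiperiodic_even P (fold_indicator P)"
  by (simp add: antiperiodic_even_def fold_indicator_add_period fold_indicator_uminus)

lemma antiperiodic_even_shift_sum_fold_indicator:
  "2 < P \<Longrightarrow> antiperiodic_even P ((shift_sum ^^ n) (fold_indicator P) :: int \<Rightarrow> 'a::ring_1)"
  by (intro antiperiodic_even_funpow_shift_sum antiperiodic_even_fold_indicator)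

lemma fold_indicator_central:
  assumes "\<bar>t\<bar> \<le> P - 2"
  shows "fold_indicator P t = (if \<bar>t\<bar> \<le> 1 then 1 else 0)"
proof (cases "- 1 \<le> t")
  case True
  with assms have "(t + 1) div P = 0" "(t + 1) mod P = t + 1"
    by (simp_all add: div_pos_pos_trivial mod_pos_pos_trivial)
  with True show ?thesis
    by (simp add: fold_indicator_def abs_le_iff)
next
  case False
  with assms have "(t + 1) mod P = t + 1 + P"
    using int_mod_pos_eq[of "t + 1" P "- 1" "t + 1 + P"] by simp
  with False assms show ?thesis
    by (simp add: fold_indicator_def)
qed

section \<open>Lucas polynomials\<close>

fun lucas_poly :: "nat \<Rightarrow> 'a::comm_ring_1 poly" where
  "lucas_poly 0 = [:2:]"
| "lucas_poly (Suc 0) = 1"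
| "lucas_poly (Suc (Suc n)) = lucas_poly (Suc n) - pCons 0 (lucas_poly n)"

lemma coeff_lucas_poly_Suc_Suc:
  "coeff (lucas_poly (Suc (Suc n))) i =
     coeff (lucas_poly (Suc n)) i - (if i = 0 then 0 else coeff (lucas_poly n) (i - 1))"
  by (cases i) (simp_all add: coeff_pCons)

declare lucas_poly.simps(3) [simp del]

lemma poly_lucas_poly:
  fixes a b :: "'a::comm_ring_1"
  assumes "a + b = 1" and "a * b = x"
  shows "poly (lucas_poly n) x = a ^ n + b ^ n"
proof (induction n rule: lucas_poly.induct)
  case (3 n)
  have "poly (lucas_poly (Suc (Suc n))) x = (a + b) * (a ^ Suc n + b ^ Suc n) - a * b * (a ^ n + b ^ n)"
    by (simp add: lucas_poly.simps 3 assms)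
  also have "\<dots> = a ^ Suc (Suc n) + b ^ Suc (Suc n)"
    by (simp add: algebra_simps)
  finally show ?case .
qed (use assms in simp_all)

lemma poly_lucas_poly_eq_p_fun: "poly (lucas_poly (Suc \<delta>)) x = p_fun \<delta> x"
  unfolding p_fun_def Suc_eq_plus1
proof (rule poly_lucas_poly)
  let ?r = "csqrt (1 - 4 * x)"
  show "(1 + ?r) / 2 + (1 - ?r) / 2 = 1"
    by (simp add: field_simps)
  have "(1 + ?r) / 2 * ((1 - ?r) / 2) = (1 - ?r ^ 2) / 4"
    by (simp add: field_simps power2_eq_square)
  then show "(1 + ?r) / 2 * ((1 - ?r) / 2) = x"
    by simp
qed

lemma coeff_0_lucas_poly_Suc: "coeff (lucas_poly (Suc n)) 0 = 1"
  by (induction n) (simp_all add: coeff_lucas_poly_Suc_Suc)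

lemma coeff_lucas_poly_eq_0: "n < 2 * i \<Longrightarrow> coeff (lucas_poly n) i = 0"
proof (induction n arbitrary: i rule: lucas_poly.induct)
  case (3 n)
  then show ?case
    using "3.IH"(1)[of i] "3.IH"(2)[of "i - 1"] by (simp add: coeff_lucas_poly_Suc_Suc)
qed (auto simp: coeff_pCons split: nat.split)

lemma coeff_lucas_poly_half:
  "coeff (lucas_poly (2 * k) :: 'a::comm_ring_1 poly) k = 2 * (- 1) ^ k \<and>
   coeff (lucas_poly (Suc (2 * k)) :: 'a poly) k = of_nat (Suc (2 * k)) * (- 1) ^ k"
proof (induction k)
  case (Suc k)
  have "coeff (lucas_poly (Suc (2 * k)) :: 'a poly) (Suc k) = 0"
    by (simp add: coeff_lucas_poly_eq_0)
  then have even: "coeff (lucas_poly (2 * Suc k) :: 'a poly) (Suc k) = 2 * (- 1) ^ Suc k"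
    using Suc.IH by (simp add: coeff_lucas_poly_Suc_Suc)
  then have "coeff (lucas_poly (Suc (2 * Suc k)) :: 'a poly) (Suc k) =
      of_nat (Suc (2 * Suc k)) * (- 1) ^ Suc k"
    using Suc.IH by (simp add: coeff_lucas_poly_Suc_Suc algebra_simps)
  with even show ?case
    by simp
qed simp

lemma degree_lucas_poly_le: "degree (lucas_poly n) \<le> n div 2"
  by (rule degree_le) (auto intro: coeff_lucas_poly_eq_0)

lemma degree_lucas_poly: "degree (lucas_poly n :: 'a::{idom, ring_char_0} poly) = n div 2"
proof (rule antisym[OF degree_lucas_poly_le le_degree])
  obtain k where "n = 2 * k \<or> n = Suc (2 * k)"
    by (metis oddE evenE Suc_eq_plus1)
  then show "coeff (lucas_poly n :: 'a poly) (n div 2) \<noteq> 0"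
    using coeff_lucas_poly_half[of k, where 'a = 'a] of_nat_neq_0[of "2 * k", where 'a = 'a]
    by (auto simp del: of_nat_Suc)
qed

lemma lucas_shift_sum_Suc_Suc:
  fixes f :: "int \<Rightarrow> 'a::comm_ring_1"
  defines "S k j \<equiv> \<Sum>i\<le>k. coeff (lucas_poly k) i * (shift_sum ^^ (k - 2 * i)) f j"
  shows "S (Suc (Suc n)) j = S (Suc n) (j - 1) + S (Suc n) (j + 1) - S n j"
proof -
  let ?T = "\<lambda>k. (shift_sum ^^ k) f"
  have "coeff (lucas_poly (Suc n)) i * ?T (Suc (Suc n) - 2 * i) j =
      coeff (lucas_poly (Suc n)) i * (?T (Suc n - 2 * i) (j - 1) + ?T (Suc n - 2 * i) (j + 1))" for i
  proof (cases "2 * i \<le> Suc n")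
    case True
    then have "Suc (Suc n) - 2 * i = Suc (Suc n - 2 * i)"
      by simp
    then show ?thesis
      by (simp add: shift_sum_def)
  qed (simp add: coeff_lucas_poly_eq_0)
  then have first: "(\<Sum>i\<le>Suc (Suc n). coeff (lucas_poly (Suc n)) i * ?T (Suc (Suc n) - 2 * i) j) =
      S (Suc n) (j - 1) + S (Suc n) (j + 1)"
    by (simp add: S_def coeff_lucas_poly_eq_0 distrib_left sum.distrib)
  have "(\<Sum>i\<le>Suc (Suc n). (if i = 0 then 0 else coeff (lucas_poly n) (i - 1)) *
          ?T (Suc (Suc n) - 2 * i) j) = (\<Sum>i\<le>Suc n. coeff (lucas_poly n) i * ?T (n - 2 * i) j)"
    by (subst sum.atMost_Suc_shift) simp
  also have "\<dots> = S n j"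
    by (simp add: S_def coeff_lucas_poly_eq_0)
  finally show ?thesis
    using first by (simp add: S_def coeff_lucas_poly_Suc_Suc left_diff_distrib sum_subtractf)
qed

lemma lucas_shift_sum:
  fixes f :: "int \<Rightarrow> 'a::comm_ring_1"
  shows "(\<Sum>i\<le>n. coeff (lucas_poly n) i * (shift_sum ^^ (n - 2 * i)) f j) = f (j + int n) + f (j - int n)"
proof (induction n arbitrary: j rule: lucas_poly.induct)
  case (3 n)
  show ?case
    unfolding lucas_shift_sum_Suc_Suc 3 by (simp add: algebra_simps)
qed (simp_all add: shift_sum_def)

lemma lucas_shift_sum_antiperiodic:
  fixes g :: "int \<Rightarrow> 'a::comm_ring_1"
  assumes "\<And>j. g (j + 2 * int n) = - g j"
  shows "(\<Sum>i\<le>n. coeff (lucas_poly n) i * (shift_sum ^^ (n - 2 * i)) g j) = 0"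
proof -
  have "g (j - int n + 2 * int n) = - g (j - int n)"
    by (rule assms)
  then show ?thesis
    unfolding lucas_shift_sum by (simp add: algebra_simps)
qed

section \<open>Counting walks by reflection\<close>

lemma card_walks_eq_shift_sum:
  assumes "0 < \<delta>"
  shows "\<bar>s\<bar> \<le> int \<delta> \<Longrightarrow> d = 1 \<or> d = -1 \<Longrightarrow>
    (of_nat (card (walks \<delta> (Suc n) s d)) :: 'a::{idom, ring_char_0}) =
    (if \<bar>s + d\<bar> \<le> int \<delta> then (shift_sum ^^ n) (fold_indicator (2 * int \<delta> + 2)) (s + d) else 0)"
proof (induction n arbitrary: s d)
  case 0
  show ?case
  proof (cases "\<bar>s + d\<bar> \<le> int \<delta>")
    case True
    then have "card (walks \<delta> 1 s d) = (if \<bar>s + d\<bar> \<le> 1 then 1 else 0)"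
      using card_walks_Suc[OF 0 True, of 0] by (simp add: walks_0 split: if_splits)
    then show ?thesis
      using True fold_indicator_central[of "s + d" "2 * int \<delta> + 2", where 'a = 'a] by simp
  qed (simp add: walks_Suc 0)
next
  case (Suc n)
  let ?g = "(shift_sum ^^ n) (fold_indicator (2 * int \<delta> + 2)) :: int \<Rightarrow> 'a"
  show ?case
  proof (cases "\<bar>s + d\<bar> \<le> int \<delta>")
    case sd: True
    have anti: "antiperiodic_even (2 * (int \<delta> + 1)) ?g"
      unfolding distrib_left mult_1_right
      by (rule antiperiodic_even_shift_sum_fold_indicator) (use assms in simp)
    then have "?g (int \<delta> + 1) = 0"
      by (rule antiperiodic_even_half_period)
    moreover from anti have "?g (- (int \<delta> + 1)) = ?g (int \<delta> + 1)"
      unfolding antiperiodic_even_def by blast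
    moreover have "s + d + d = int \<delta> + 1 \<or> s + d + d = - (int \<delta> + 1)"
      if "\<not> \<bar>s + d + d\<bar> \<le> int \<delta>"
      using that sd Suc.prems by auto
    ultimately have edge: "?g (s + d + d) = 0" if "\<not> \<bar>s + d + d\<bar> \<le> int \<delta>"
      using that by fastforce
    have "- d = 1 \<or> - d = -1"
      using Suc.prems(2) by auto
    then have X: "of_nat (card (walks \<delta> (Suc n) (s + d) (- d))) = ?g s"
      using Suc.IH[OF sd] Suc.prems(1) by simp
    have Y: "of_nat (card (walks \<delta> (Suc n) (s + d) d)) = ?g (s + d + d)"
      using Suc.IH[OF sd Suc.prems(2)] edge by auto
    have "card (walks \<delta> (Suc (Suc n)) s d) =
        card (walks \<delta> (Suc n) (s + d) (- d)) + card (walks \<delta> (Suc n) (s + d) d)"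
      using card_walks_Suc[OF Suc.prems sd, of "Suc n"] by simp
    then have "(of_nat (card (walks \<delta> (Suc (Suc n)) s d)) :: 'a) = ?g s + ?g (s + d + d)"
      by (simp add: X Y)
    also have "\<dots> = (shift_sum ^^ Suc n) (fold_indicator (2 * int \<delta> + 2)) (s + d)"
      using Suc.prems(2) by (elim disjE) (simp_all add: shift_sum_def add.commute)
    finally show ?thesis
      using sd by simp
  qed (simp add: walks_Suc Suc.prems)
qed

lemma zeta_eq_shift_sum:
  assumes "0 < \<delta>" "0 < m"
  shows "2 * (of_nat (zeta m \<delta>) :: 'a::{idom, ring_char_0}) =
    (shift_sum ^^ m) (fold_indicator (2 * int \<delta> + 2)) 0"
proof -
  obtain n where m: "m = Suc n"
    using assms(2) gr0_implies_Suc by blast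
  let ?g = "(shift_sum ^^ n) (fold_indicator (2 * int \<delta> + 2)) :: int \<Rightarrow> 'a"
  have "antiperiodic_even (2 * int \<delta> + 2) ?g"
    by (rule antiperiodic_even_shift_sum_fold_indicator) (use assms in simp)
  then have "?g (- 1) = ?g 1"
    by (simp add: antiperiodic_even_def)
  moreover have "(of_nat (zeta m \<delta>) :: 'a) = ?g 1"
    using card_walks_eq_shift_sum[OF assms(1), of 0 1 n] assms(1)
    by (simp add: zeta_eq_card_walks m)
  moreover have "(shift_sum ^^ m) (fold_indicator (2 * int \<delta> + 2)) 0 = ?g (- 1) + ?g 1"
    by (simp add: m shift_sum_def)
  ultimately show ?thesis
    by (simp only: mult_2)
qed

lemma zeta_lucas_recurrence:
  assumes "0 < \<delta>" "2 * (Suc \<delta> div 2) < m"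
  shows "(\<Sum>i\<le>Suc \<delta> div 2. coeff (lucas_poly (Suc \<delta>)) i * of_nat (zeta (m - 2 * i) \<delta>)) =
    (0 :: 'a::{idom, ring_char_0})"
proof -
  let ?N = "Suc \<delta>" and ?c = "coeff (lucas_poly (Suc \<delta>)) :: nat \<Rightarrow> 'a"
  define g :: "int \<Rightarrow> 'a" where "g = (shift_sum ^^ (m - ?N)) (fold_indicator (2 * int \<delta> + 2))"
  have "2 * (\<Sum>i\<le>?N div 2. ?c i * of_nat (zeta (m - 2 * i) \<delta>))
      = (\<Sum>i\<le>?N div 2. ?c i * (shift_sum ^^ (?N - 2 * i)) g 0)"
    unfolding sum_distrib_left
  proof (rule sum.cong[OF refl])
    fix i assume "i \<in> {..?N div 2}"
    then have "m - 2 * i = (?N - 2 * i) + (m - ?N)" and "0 < m - 2 * i"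
      using assms(2) by auto
    then show "2 * (?c i * of_nat (zeta (m - 2 * i) \<delta>)) = ?c i * (shift_sum ^^ (?N - 2 * i)) g 0"
      using zeta_eq_shift_sum[OF assms(1), of "m - 2 * i", where 'a = 'a]
      by (simp add: g_def funpow_add)
  qed
  also have "\<dots> = (\<Sum>i\<le>?N. ?c i * (shift_sum ^^ (?N - 2 * i)) g 0)"
    by (rule sum.mono_neutral_left) (auto simp: coeff_lucas_poly_eq_0)
  also have "\<dots> = 0"
  proof (rule lucas_shift_sum_antiperiodic)
    have "antiperiodic_even (2 * int \<delta> + 2) g"
      unfolding g_def by (rule antiperiodic_even_shift_sum_fold_indicator) (use assms in simp)
    moreover have "2 * int ?N = 2 * int \<delta> + 2"
      by simp
    ultimately show "g (j + 2 * int ?N) = - g j" for j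
      by (simp only: antiperiodic_even_def)
  qed
  finally show ?thesis
    by simp
qed

theorem theorem2:
  fixes \<delta> :: nat
  assumes "0 < \<delta>"
  shows "\<exists>q :: complex poly.
           (\<forall>x. poly q x = p_fun \<delta> x) \<and>
           coeff q 0 = 1 \<and>
           (\<forall>m::nat. m \<ge> 2 * degree q + 1 \<longrightarrow>
              (\<Sum>i\<le>degree q. coeff q i * of_nat (zeta (m - 2 * i) \<delta>)) = 0)"
proof (intro exI conjI allI impI)
  let ?q = "lucas_poly (Suc \<delta>) :: complex poly"
  show "poly ?q x = p_fun \<delta> x" for x
    by (rule poly_lucas_poly_eq_p_fun)
  show "coeff ?q 0 = 1"
    by (rule coeff_0_lucas_poly_Suc)
  fix m assume "2 * degree ?q + 1 \<le> m"
  then show "(\<Sum>i\<le>degree ?q. coeff ?q i * of_nat (zeta (m - 2 * i) \<delta>)) = 0"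
    unfolding degree_lucas_poly by (intro zeta_lucas_recurrence assms) simp
qed

end
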